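(* Let $\alpha,\beta>0$, let $n\ge 1$ be an integer, and let $f\in\mathcal{H}_\alpha(M)$ and $V\in\mathcal{H}_\beta(M)$. For $0\le i\le n-1$ set $W_i=V(\tfrac{i}{n})+V(\tfrac{i+1}{n})$ and $\delta_i=f(\tfrac{i+1}{n})-f(\tfrac{i}{n})$, let $\bar W_n=\frac1n\sum_{i=0}^{n-1}W_i$, $\overline{\delta^2_n}=\frac1n\sum_{i=0}^{n-1}\delta_i^2$, and $$T=\frac1n\sum_{i=0}^{n-1}\left(W_i+\delta_i^2-\bar W_n-\overline{\delta^2_n}\right)^2 .$$ Then, with $\bar V=\int_0^1V(x)\,dx$ and $\mathbf 1$ the constant function equal to one on $[0,1]$, $$\|V-\bar V\mathbf 1\|_2^2\lesssim T+n^{-2(\beta\wedge 1)}+n^{-4(\alpha\wedge1)},$$ where the implicit constant does not depend on $n$, $f$ or $V$.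
   Context: For $\alpha,M>0$, the Hölder class $\mathcal{H}_\alpha(M)$ is the set of functions $g:[0,1]\to\mathbb{R}$ such that $|g^{(\lfloor\alpha\rfloor)}(x)-g^{(\lfloor\alpha\rfloor)}(y)|\le M|x-y|^{\alpha-\lfloor\alpha\rfloor}$ for all $x,y\in[0,1]$ and $\|g^{(k)}\|_\infty\le M$ for all $k\in\{0,\dots,\lfloor\alpha\rfloor\}$. $M$ is a fixed, sufficiently large constant. $a\lesssim b$ means $a\le Cb$ for a constant $C$ which may depend on $\alpha,\beta,M$ only. $\|\cdot\|_2$ is the $L^2([0,1])$ norm; $a\wedge b=\min\{a,b\}$. *)

theory Defs
  imports "HOL-Analysis.Analysis"
begin

definition holder :: "real \<Rightarrow> real \<Rightarrow> (real \<Rightarrow> real) set" where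
  "holder \<alpha> M = {g. \<exists>D :: nat \<Rightarrow> real \<Rightarrow> real.
      (\<forall>x\<in>{0..1}. D 0 x = g x) \<and>
      (\<forall>j < nat \<lfloor>\<alpha>\<rfloor>. \<forall>x\<in>{0..1}.
          (D j has_real_derivative D (Suc j) x) (at x within {0..1})) \<and>
      (\<forall>j \<le> nat \<lfloor>\<alpha>\<rfloor>. \<forall>x\<in>{0..1}. \<bar>D j x\<bar> \<le> M) \<and>
      (\<forall>x\<in>{0..1}. \<forall>y\<in>{0..1}.
          \<bar>D (nat \<lfloor>\<alpha>\<rfloor>) x - D (nat \<lfloor>\<alpha>\<rfloor>) y\<bar> \<le> M * \<bar>x - y\<bar> powr (\<alpha> - of_int \<lfloor>\<alpha>\<rfloor>))}"

end

theory Submission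
  imports Defs
begin

text \<open>Since the mean minimises the mean square deviation, the variance of V is at most the
  integral of (V - c)^2 for c = (Wbar + d2bar)/2. On the i-th cell of the grid, V differs from
  both endpoint values, hence from W_i/2, by at most M n^(-min beta 1), and delta_i^2 is at most
  M^2 n^(-2 min alpha 1). So V - c equals (W_i + delta_i^2 - Wbar - d2bar)/2 up to these errors,
  and integrating cell by cell turns the squares of the main terms into T.\<close>

lemma holder_increment_le:
  assumes g: "g \<in> holder \<gamma> M" and "\<gamma> > 0" and x: "x \<in> {0..1}" and y: "y \<in> {0..1}"
  shows "\<bar>g x - g y\<bar> \<le> M * \<bar>x - y\<bar> powr min \<gamma> 1"
proof -
  obtain D where D0: "\<forall>x\<in>{0..1}. D 0 x = g x"
    and deriv: "\<forall>j < nat \<lfloor>\<gamma>\<rfloor>. \<forall>x\<in>{0..1}. (D j has_real_derivative D (Suc j) x) (at x within {0..1})"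
    and bounded: "\<forall>j \<le> nat \<lfloor>\<gamma>\<rfloor>. \<forall>x\<in>{0..1}. \<bar>D j x\<bar> \<le> M"
    and top: "\<forall>x\<in>{0..1}. \<forall>y\<in>{0..1}.
      \<bar>D (nat \<lfloor>\<gamma>\<rfloor>) x - D (nat \<lfloor>\<gamma>\<rfloor>) y\<bar> \<le> M * \<bar>x - y\<bar> powr (\<gamma> - of_int \<lfloor>\<gamma>\<rfloor>)"
    using g unfolding holder_def by blast
  show ?thesis
  proof (cases "\<gamma> < 1")
    case True
    then have "\<lfloor>\<gamma>\<rfloor> = 0" using \<open>\<gamma> > 0\<close> by linarith
    then show ?thesis using True top x y D0 by auto
  next
    case False
    then have "0 < nat \<lfloor>\<gamma>\<rfloor>" by linarith
    then have "\<forall>z\<in>{0..1}. \<bar>D 1 z\<bar> \<le> M"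
      using bounded by (simp add: Suc_leI)
    then have "norm (D 0 x - D 0 y) \<le> M * norm (x - y)"
      using deriv \<open>0 < nat \<lfloor>\<gamma>\<rfloor>\<close> x y
      by (intro field_differentiable_bound[where S="{0..1}" and f'="D 1"]) auto
    then show ?thesis using False D0 x y by auto
  qed
qed

lemma holder_increment_le_mesh:
  fixes n :: nat
  assumes "g \<in> holder \<gamma> M" and "\<gamma> > 0" and "M \<ge> 0" and "n \<ge> 1"
    and "x \<in> {0..1}" and "y \<in> {0..1}" and "\<bar>x - y\<bar> \<le> 1 / n"
  shows "\<bar>g x - g y\<bar> \<le> M * real n powr (- min \<gamma> 1)"
proof -
  have "\<bar>g x - g y\<bar> \<le> M * \<bar>x - y\<bar> powr min \<gamma> 1"
    using assms by (intro holder_increment_le)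
  also have "\<dots> \<le> M * (1 / real n) powr min \<gamma> 1"
    using assms by (intro mult_left_mono powr_mono2) auto
  also have "\<dots> = M * real n powr (- min \<gamma> 1)"
    using assms(4) by (simp add: powr_divide powr_minus_divide)
  finally show ?thesis .
qed

lemma holder_continuous_on:
  assumes g: "g \<in> holder \<gamma> M" and "\<gamma> > 0"
  shows "continuous_on {0..1} g"
  unfolding continuous_on_def
proof
  fix x :: real assume x: "x \<in> {0..1}"
  have "((\<lambda>y. g y - g x) \<longlongrightarrow> 0) (at x within {0..1})"
  proof (rule Lim_null_comparison)
    show "\<forall>\<^sub>F y in at x within {0..1}. norm (g y - g x) \<le> M * \<bar>y - x\<bar> powr min \<gamma> 1"
      using holder_increment_le[OF g \<open>\<gamma> > 0\<close> _ x] by (auto simp: eventually_at_filter)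
    have "((\<lambda>y. \<bar>y - x\<bar> powr min \<gamma> 1) \<longlongrightarrow> 0) (at x within {0..1})"
      using \<open>\<gamma> > 0\<close> by (intro tendsto_zero_powrI[where b="min \<gamma> 1"]) (auto intro!: tendsto_eq_intros)
    then show "((\<lambda>y. M * \<bar>y - x\<bar> powr min \<gamma> 1) \<longlongrightarrow> 0) (at x within {0..1})"
      by (rule tendsto_mult_right_zero)
  qed
  then show "(g \<longlongrightarrow> g x) (at x within {0..1})"
    by (rule LIM_zero_cancel)
qed

lemma integral_unit_interval_eq_sum_cells:
  fixes g :: "real \<Rightarrow> real" and n :: nat
  assumes "g integrable_on {0..1}" and "n \<ge> 1"
  shows "integral {0..1} g = (\<Sum>i<n. integral {real i / n..real (Suc i) / n} g)"
proof -
  have "integral {0..real k / n} g = (\<Sum>i<k. integral {real i / n..real (Suc i) / n} g)"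
    if "k \<le> n" for k
    using that
  proof (induction k)
    case 0
    then show ?case by simp
  next
    case (Suc k)
    have "g integrable_on {0..real (Suc k) / n}"
      using Suc.prems by (intro integrable_on_subinterval[OF assms(1)]) (auto simp: field_simps)
    then have "integral {0..real (Suc k) / n} g
        = integral {0..real k / n} g + integral {real k / n..real (Suc k) / n} g"
      using Henstock_Kurzweil_Integration.integral_combine[of 0 "real k / n" "real (Suc k) / n" g]
      by (simp add: divide_right_mono)
    then show ?case using Suc by simp
  qed
  from this[of n] show ?thesis using assms(2) by simp
qed

lemma integral_unit_interval_le_cellwise:
  fixes g :: "real \<Rightarrow> real" and n :: nat
  assumes "continuous_on {0..1} g" and "n \<ge> 1"
    and bound: "\<And>i x. i < n \<Longrightarrow> x \<in> {real i / n..real (Suc i) / n} \<Longrightarrow> g x \<le> b i"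
  shows "integral {0..1} g \<le> (\<Sum>i<n. b i) / n"
proof -
  have cell: "integral {real i / n..real (Suc i) / n} g \<le> b i / n" if "i < n" for i
  proof -
    have "{real i / n..real (Suc i) / n} \<subseteq> {0..1}"
      using that by (auto simp: field_simps)
    then have "integral {real i / n..real (Suc i) / n} g
        \<le> integral {real i / n..real (Suc i) / n} (\<lambda>x. b i)"
      using bound[OF that]
      by (intro integral_le integrable_continuous_interval continuous_on_subset[OF assms(1)]) auto
    also have "\<dots> = b i / n"
      by (simp add: divide_right_mono diff_divide_distrib[symmetric])
    finally show ?thesis .
  qed
  have "integral {0..1} g = (\<Sum>i<n. integral {real i / n..real (Suc i) / n} g)"
    using assms(1,2) by (intro integral_unit_interval_eq_sum_cells integrable_continuous_interval)
  also have "\<dots> \<le> (\<Sum>i<n. b i / n)"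
    using cell by (intro sum_mono) auto
  finally show ?thesis
    by (simp add: sum_divide_distrib)
qed

lemma integral_square_deviation_eq:
  fixes V :: "real \<Rightarrow> real"
  assumes "continuous_on {0..1} V"
  defines "m \<equiv> integral {0..1} V"
  shows "integral {0..1} (\<lambda>x. (V x - c)\<^sup>2) = integral {0..1} (\<lambda>x. (V x - m)\<^sup>2) + (m - c)\<^sup>2"
proof -
  have "(V has_integral m) {0..1}"
    using assms integrable_continuous_interval unfolding m_def by blast
  then have "((\<lambda>x. 2 * (m - c) * (V x - m)) has_integral 0) {0..1}"
    using has_integral_mult_right[OF has_integral_diff[OF _ has_integral_const_real[of m 0 1]]]
    by fastforce
  moreover have "((\<lambda>x. (V x - m)\<^sup>2) has_integral integral {0..1} (\<lambda>x. (V x - m)\<^sup>2)) {0..1}"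
    using assms(1) by (intro integrable_integral integrable_continuous_interval continuous_intros)
  ultimately have "((\<lambda>x. (V x - m)\<^sup>2 + 2 * (m - c) * (V x - m) + (m - c)\<^sup>2) has_integral
      integral {0..1} (\<lambda>x. (V x - m)\<^sup>2) + 0 + (m - c)\<^sup>2) {0..1}"
    using has_integral_const_real[of "(m - c)\<^sup>2" 0 1] by (intro has_integral_add) auto
  moreover have "(V x - m)\<^sup>2 + 2 * (m - c) * (V x - m) + (m - c)\<^sup>2 = (V x - c)\<^sup>2" for x
    by (simp add: power2_eq_square algebra_simps)
  ultimately show ?thesis
    by (simp add: integral_unique)
qed

lemma integral_square_deviation_mean_le:
  fixes V :: "real \<Rightarrow> real"
  assumes "continuous_on {0..1} V"
  shows "integral {0..1} (\<lambda>x. (V x - integral {0..1} V)\<^sup>2) \<le> integral {0..1} (\<lambda>x. (V x - c)\<^sup>2)"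
  using integral_square_deviation_eq[OF assms, of c] by simp

lemma grid_cell_bounds:
  fixes n i :: nat
  assumes "i < n" and "x \<in> {real i / n..real (Suc i) / n}"
  shows "x \<in> {0..1}" and "\<bar>x - real i / n\<bar> \<le> 1 / n" and "\<bar>x - real (Suc i) / n\<bar> \<le> 1 / n"
proof -
  have "0 \<le> real i / n" and "real (Suc i) / n \<le> 1" and "real (Suc i) / n - real i / n = 1 / n"
    using assms(1) by (auto simp: field_simps)
  moreover have "real i / n \<le> x" and "x \<le> real (Suc i) / n"
    using assms(2) by auto
  ultimately show "x \<in> {0..1}" and "\<bar>x - real i / n\<bar> \<le> 1 / n" and "\<bar>x - real (Suc i) / n\<bar> \<le> 1 / n"
    unfolding atLeastAtMost_iff abs_le_iff by linarith+
qed

lemma square_deviation_le_of_close_endpoints: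
  fixes v w0 w1 s c E S :: real
  assumes "\<bar>v - w0\<bar> \<le> E" and "\<bar>v - w1\<bar> \<le> E" and "0 \<le> s" and "s \<le> S"
  shows "(v - c)\<^sup>2 \<le> 4 * E\<^sup>2 + S\<^sup>2 + (w0 + w1 + s - 2 * c)\<^sup>2 / 2"
proof -
  define A where "A = v - (w0 + w1) / 2 - s / 2"
  define Q where "Q = w0 + w1 + s - 2 * c"
  have "\<bar>A\<bar> \<le> E + S / 2"
    using assms unfolding A_def by (simp add: abs_le_iff field_simps)
  then have "A\<^sup>2 \<le> (E + S / 2)\<^sup>2"
    by (metis abs_ge_zero power2_abs power_mono)
  have square_sum_le: "(a + b)\<^sup>2 \<le> 2 * a\<^sup>2 + 2 * b\<^sup>2" for a b :: real
    using sum_squares_ge_zero[of "a - b" 0] by (simp add: power2_eq_square algebra_simps)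
  have "(v - c)\<^sup>2 = (A + Q / 2)\<^sup>2"
    unfolding A_def Q_def by (simp add: field_simps power2_eq_square)
  also have "\<dots> \<le> 2 * A\<^sup>2 + Q\<^sup>2 / 2"
    using square_sum_le[of A "Q / 2"] by (simp add: power2_eq_square)
  also have "\<dots> \<le> 2 * (E + S / 2)\<^sup>2 + Q\<^sup>2 / 2"
    using \<open>A\<^sup>2 \<le> (E + S / 2)\<^sup>2\<close> by simp
  also have "2 * (E + S / 2)\<^sup>2 \<le> 4 * E\<^sup>2 + S\<^sup>2"
    using square_sum_le[of E "S / 2"] by (simp add: power2_eq_square)
  finally show ?thesis
    unfolding Q_def by simp
qed

lemma integral_square_deviation_le_grid_statistic:
  fixes n :: nat and f V :: "real \<Rightarrow> real"
  assumes n: "n \<ge> 1" and f: "f \<in> holder \<alpha> M" and V: "V \<in> holder \<beta> M"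
    and "\<alpha> > 0" and "\<beta> > 0" and "M \<ge> 0"
    and W_def: "W = (\<lambda>i. V (real i / n) + V (real (Suc i) / n))"
    and \<delta>_def: "\<delta> = (\<lambda>i. f (real (Suc i) / n) - f (real i / n))"
  shows "integral {0..1} (\<lambda>x. (V x - integral {0..1} V)\<^sup>2)
    \<le> 4 * M\<^sup>2 * real n powr (- 2 * min \<beta> 1) + M ^ 4 * real n powr (- 4 * min \<alpha> 1)
      + (\<Sum>i<n. (W i + (\<delta> i)\<^sup>2 - (\<Sum>j<n. W j) / n - (\<Sum>j<n. (\<delta> j)\<^sup>2) / n)\<^sup>2) / n / 2"
proof -
  define Q where "Q i = W i + (\<delta> i)\<^sup>2 - (\<Sum>j<n. W j) / n - (\<Sum>j<n. (\<delta> j)\<^sup>2) / n" for i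
  define c where "c = ((\<Sum>j<n. W j) / n + (\<Sum>j<n. (\<delta> j)\<^sup>2) / n) / 2"
  define E where "E = M * real n powr (- min \<beta> 1)"
  define S where "S = (M * real n powr (- min \<alpha> 1))\<^sup>2"
  define B where "B = 4 * M\<^sup>2 * real n powr (- 2 * min \<beta> 1) + M ^ 4 * real n powr (- 4 * min \<alpha> 1)"
  have B_eq: "B = 4 * E\<^sup>2 + S\<^sup>2"
    using n unfolding B_def E_def S_def
    by (simp add: power2_eq_square power4_eq_xxxx powr_add[symmetric] algebra_simps)
  have V_cont: "continuous_on {0..1} V"
    using V \<open>\<beta> > 0\<close> by (rule holder_continuous_on)
  have pointwise: "(V x - c)\<^sup>2 \<le> B + (Q i)\<^sup>2 / 2"
    if i: "i < n" and x: "x \<in> {real i / n..real (Suc i) / n}" for i x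
  proof -
    have left: "real i / n \<in> {real i / n..real (Suc i) / n}"
      and right: "real (Suc i) / n \<in> {real i / n..real (Suc i) / n}"
      by (auto simp: divide_right_mono)
    note cell = grid_cell_bounds[OF i x] grid_cell_bounds[OF i left] grid_cell_bounds[OF i right]
    have "\<bar>V x - V (real i / n)\<bar> \<le> E" and "\<bar>V x - V (real (Suc i) / n)\<bar> \<le> E"
      unfolding E_def using cell V \<open>\<beta> > 0\<close> \<open>M \<ge> 0\<close> n
      by (auto intro: holder_increment_le_mesh)
    moreover have "\<bar>\<delta> i\<bar> \<le> M * real n powr (- min \<alpha> 1)"
      unfolding \<delta>_def using cell f \<open>\<alpha> > 0\<close> \<open>M \<ge> 0\<close> n
      by (auto intro: holder_increment_le_mesh)
    then have "(\<delta> i)\<^sup>2 \<le> S"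
      unfolding S_def by (metis abs_ge_zero power2_abs power_mono)
    ultimately have "(V x - c)\<^sup>2 \<le> 4 * E\<^sup>2 + S\<^sup>2 + (W i + (\<delta> i)\<^sup>2 - 2 * c)\<^sup>2 / 2"
      unfolding W_def by (intro square_deviation_le_of_close_endpoints) auto
    moreover have "W i + (\<delta> i)\<^sup>2 - 2 * c = Q i"
      unfolding c_def Q_def by (simp add: field_simps)
    ultimately show ?thesis
      by (simp add: B_eq)
  qed
  have "integral {0..1} (\<lambda>x. (V x - integral {0..1} V)\<^sup>2) \<le> integral {0..1} (\<lambda>x. (V x - c)\<^sup>2)"
    using V_cont by (rule integral_square_deviation_mean_le)
  also have "\<dots> \<le> (\<Sum>i<n. B + (Q i)\<^sup>2 / 2) / n"
    using V_cont n pointwise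
    by (intro integral_unit_interval_le_cellwise continuous_intros) auto
  also have "\<dots> = B + (\<Sum>i<n. (Q i)\<^sup>2) / n / 2"
    using n by (simp add: sum.distrib sum_divide_distrib[symmetric] field_simps)
  finally show ?thesis
    unfolding B_def Q_def .
qed

theorem proposition2p1:
  fixes \<alpha> \<beta> M :: real
  assumes "\<alpha> > 0" and "\<beta> > 0" and "M > 0"
  shows "\<exists>C > 0. \<forall>(n::nat) (f::real \<Rightarrow> real) (V::real \<Rightarrow> real).
    n \<ge> 1 \<longrightarrow> f \<in> holder \<alpha> M \<longrightarrow> V \<in> holder \<beta> M \<longrightarrow>
    (let W = (\<lambda>i::nat. V (real i / real n) + V (real (Suc i) / real n));
         \<delta> = (\<lambda>i::nat. f (real (Suc i) / real n) - f (real i / real n));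
         Wbar = (\<Sum>i<n. W i) / real n;
         d2bar = (\<Sum>i<n. (\<delta> i)\<^sup>2) / real n;
         T = (\<Sum>i<n. (W i + (\<delta> i)\<^sup>2 - Wbar - d2bar)\<^sup>2) / real n;
         Vbar = integral {0..1} V
     in integral {0..1} (\<lambda>x. (V x - Vbar)\<^sup>2)
        \<le> C * (T + real n powr (- 2 * min \<beta> 1) + real n powr (- 4 * min \<alpha> 1)))"
proof (intro exI[of _ "4 * M\<^sup>2 + M ^ 4 + 1"] conjI allI impI, goal_cases)
  case 1
  show ?case
    by (simp add: add_nonneg_pos)
next
  case (2 n f V)
  have collect_constants: "4 * M\<^sup>2 * e + M ^ 4 * d + T / 2 \<le> (4 * M\<^sup>2 + M ^ 4 + 1) * (T + e + d)"
    if "0 \<le> T" and "0 \<le> e" and "0 \<le> d" for T e d :: real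
    using that by (simp add: algebra_simps add_nonneg_nonneg mult_nonneg_nonneg)
  note variance_le = integral_square_deviation_le_grid_statistic[OF 2 assms(1,2)
      less_imp_le[OF \<open>M > 0\<close>] refl refl]
  show ?case
    unfolding Let_def
    by (intro order_trans[OF variance_le] collect_constants divide_nonneg_nonneg sum_nonneg) auto
qed

end
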